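(* Assume the scatter-step setting and then a gather step: set $\lambda_j=\theta_j-\eta G_j$ for $j=1,\dots,h_{ps}$, and let each correct server $j$ compute $\theta'_j=\mathrm{Median}\big(\lambda_j,(\lambda_k)_{k\in X_j},z^{(j)}_1,\dots,z^{(j)}_{q_{ps}-1-|X_j|}\big)$, where $X=(X_1,\dots,X_{h_{ps}})$ is a random delivering configuration independent of the gradient randomness with $P(X=s)\ge\rho>0$ for all $s\in S$, and the $z^{(j)}$ are arbitrary (possibly depending on everything). Assume $f_{ps}\ge1$, $h_{ps}=n_{ps}-f_{ps}$ and $2f_{ps}+2\le q_{ps}\le\lfloor h_{ps}/2\rfloor$. Then $$\mathbb{E}\big[\Delta(\theta'_1,\dots,\theta'_{h_{ps}})\big]\le\Big(1+3d\eta l-\frac{\rho}{4}\Big)\Delta(\theta_1,\dots,\theta_{h_{ps}})+6d\eta h_w\sigma'.$$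
   Context: Median of reals: order statistics $y_{(1)}\le\dots\le y_{(q)}$; median $=y_{((q+1)/2)}$ for odd $q$, $\frac12(y_{(q/2)}+y_{(q/2+1)})$ for even $q$; $\mathrm{Median}$ of vectors coordinate-wise. Coordinate-wise diameters: $\Delta_i(v_1,\dots,v_h)=\max_{j,k}|v_j[i]-v_k[i]|$, $\Delta=\sum_{i=1}^d\Delta_i$. Minimum–Diameter Averaging: for $f\ge0$, $q\ge2f+1$, $\mathrm{MDA}_f(x_1,\dots,x_q)$ is the average of the $x_i$, $i\in I^*$, where $I^*$ is an index set of size $q-f$ minimizing $\max_{i,j\in I}\|x_i-x_j\|_2$ (ties arbitrary). Scatter-step setting: $L:\mathbb{R}^d\to\mathbb{R}$ differentiable with $l$-Lipschitz gradient; $\eta>0$; correct server parameters $\theta_1,\dots,\theta_{h_{ps}}\in\mathbb{R}^d$; correct workers' models $x_1,\dots,x_{h_w}$ with $\min_k\theta_k[i]\le x_r[i]\le\max_k\theta_k[i]$ for all $i,r$; random gradients $g_1,\dots,g_{h_w}$ with $\mathbb{E}\|g_r-\nabla L(x_r)\|_2\le\sigma'$; integers $f_w\ge1$, $q_w\ge2f_w+1$; each correct server $j$ computes $G_j=\mathrm{MDA}_{f_w}$ of a list of $q_w$ vectors, at least $q_w-f_w$ of which belong to $\{g_1,\dots,g_{h_w}\}$. Delivering configurations: $S_j=\{s\subset\{1,\dots,h_{ps}\}\setminus\{j\}:|s|\in\{q_{ps}-f_{ps}-1,\dots,q_{ps}-1\}\}$, $S=\prod_jS_j$. *)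

theory Defs
  imports "HOL-Probability.Probability"
begin

definition median :: "real list \<Rightarrow> real" where
  "median ys = (let zs = sort ys; q = length ys in
     if odd q then zs ! (q div 2) else (zs ! (q div 2 - 1) + zs ! (q div 2)) / 2)"

definition vmedian :: "(real ^ 'd) list \<Rightarrow> real ^ 'd" where
  "vmedian vs = (\<chi> i. median (map (\<lambda>v. v $ i) vs))"

definition coord_diam :: "nat \<Rightarrow> (nat \<Rightarrow> real ^ 'd) \<Rightarrow> 'd \<Rightarrow> real" where
  "coord_diam h v i = Max {\<bar>v j $ i - v k $ i\<bar> | j k. j < h \<and> k < h}"

definition Delta :: "nat \<Rightarrow> (nat \<Rightarrow> real ^ 'd) \<Rightarrow> real" where
  "Delta h v = (\<Sum>i\<in>UNIV. coord_diam h v i)"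

definition idx_diam :: "('a::real_normed_vector) list \<Rightarrow> nat set \<Rightarrow> real" where
  "idx_diam xs I = Max {norm (xs ! i - xs ! j) | i j. i \<in> I \<and> j \<in> I}"

text \<open>v is a possible output of MDA_f on the list xs (ties broken arbitrarily).\<close>
definition is_MDA :: "nat \<Rightarrow> ('a::real_normed_vector) list \<Rightarrow> 'a \<Rightarrow> bool" where
  "is_MDA f xs v \<longleftrightarrow>
     (\<exists>I. I \<subseteq> {..<length xs} \<and> card I = length xs - f \<and>
        (\<forall>J. J \<subseteq> {..<length xs} \<and> card J = length xs - f \<longrightarrow> idx_diam xs I \<le> idx_diam xs J) \<and>
        v = (1 / real (length xs - f)) *\<^sub>R (\<Sum>i\<in>I. xs ! i))"

definition deliv_S_j :: "nat \<Rightarrow> nat \<Rightarrow> nat \<Rightarrow> nat \<Rightarrow> nat set set" where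
  "deliv_S_j hps qps fps j =
     {s. s \<subseteq> {..<hps} - {j} \<and> card s \<in> {qps - fps - 1 .. qps - 1}}"

definition deliv_S :: "nat \<Rightarrow> nat \<Rightarrow> nat \<Rightarrow> (nat \<Rightarrow> nat set) set" where
  "deliv_S hps qps fps = PiE {..<hps} (deliv_S_j hps qps fps)"

end

(*
  Write lambda_j = theta_j - eta G_j. In each coordinate the correct values lambda_j span an
  interval [lo, hi]. The list from which a server takes its median has q_ps entries; its own value
  and the at least q_ps - f_ps - 1 relayed values of correct servers form a strict majority, so
  every new value stays in [lo, hi]. If moreover all relayed values lie on one side of the midpoint
  of [lo, hi], they make up at least half of every list, and all medians fall into an interval of
  three quarters of the length. For every coordinate such a one-sided delivering configuration
  exists, since one side of the midpoint carries at least h_ps / 2 >= q_ps correct servers.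

  The gain guaranteed by a fixed configuration depends on the gradients only, hence is independent
  of X, and every configuration has probability at least rho; summing over all configurations
  shows that in expectation at least rho / 4 of Delta(lambda) is removed. Finally Delta(lambda) is
  at most Delta(theta) + eta Delta(G), and the MDA outputs G_j lie within
  l Delta(theta) + 2 sum_r |g_r - grad L(x_r)| of a correct gradient, because the x_r lie in the
  coordinate box of the theta_j and grad L is l-Lipschitz.
*)
theory Submission
  imports Defs
begin

section \<open>Order statistics and the median\<close>

lemma filter_eq_takeWhile_if_downward_closed:
  fixes P :: "'a::linorder \<Rightarrow> bool"
  assumes "sorted xs" and down: "\<And>x y. P y \<Longrightarrow> x \<le> y \<Longrightarrow> P x"
  shows "filter P xs = takeWhile P xs"
  using assms(1)
proof (induction xs)
  case (Cons x xs)
  show ?case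
  proof (cases "P x")
    case False
    hence "\<not> P y" if "y \<in> set xs" for y
      using Cons.prems that down by auto
    with False show ?thesis by (simp add: filter_empty_conv)
  qed (use Cons in simp)
qed simp

lemma nth_sort_iff_less_length_filter:
  fixes P :: "'a::linorder \<Rightarrow> bool"
  assumes down: "\<And>x y. P y \<Longrightarrow> x \<le> y \<Longrightarrow> P x" and k: "k < length xs"
  shows "P (sort xs ! k) \<longleftrightarrow> k < length (filter P xs)"
proof -
  let ?zs = "sort xs" and ?n = "length (takeWhile P (sort xs))"
  have "length (filter P xs) = length (filter P ?zs)"
    by (metis mset_filter mset_sort size_mset)
  also have "\<dots> = ?n"
    by (simp add: filter_eq_takeWhile_if_downward_closed[OF sorted_sort down])
  finally have n: "length (filter P xs) = ?n" .
  have "P (?zs ! k) \<longleftrightarrow> k < ?n"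
  proof
    assume Pk: "P (?zs ! k)"
    show "k < ?n"
    proof (rule ccontr)
      assume "\<not> k < ?n"
      hence "?n < length ?zs" "?zs ! ?n \<le> ?zs ! k"
        using k by (simp_all add: sorted_nth_mono)
      thus False using nth_length_takeWhile[of P ?zs] down[OF Pk] by blast
    qed
  next
    assume "k < ?n"
    thus "P (?zs ! k)"
      by (metis nth_mem set_takeWhileD takeWhile_nth)
  qed
  with n show ?thesis by simp
qed

lemma nth_sort_le_iff:
  fixes xs :: "'a::linorder list"
  assumes "k < length xs"
  shows "sort xs ! k \<le> a \<longleftrightarrow> k < length (filter (\<lambda>y. y \<le> a) xs)"
  by (rule nth_sort_iff_less_length_filter[OF _ assms]) auto

lemma le_nth_sort_iff:
  fixes xs :: "'a::linorder list"
  assumes "k < length xs"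
  shows "b \<le> sort xs ! k \<longleftrightarrow> length xs - length (filter (\<lambda>y. b \<le> y) xs) \<le> k"
proof -
  have "length (filter (\<lambda>y. y < b) xs) = length xs - length (filter (\<lambda>y. b \<le> y) xs)"
    using sum_length_filter_compl[of "\<lambda>y. b \<le> y" xs] by (simp add: not_le)
  moreover have "sort xs ! k < b \<longleftrightarrow> k < length (filter (\<lambda>y. y < b) xs)"
    by (rule nth_sort_iff_less_length_filter[OF _ assms]) auto
  ultimately show ?thesis by (simp add: not_less[symmetric])
qed

lemma median_le_midpoint:
  fixes ys :: "real list"
  assumes a: "(length ys + 1) div 2 \<le> length (filter (\<lambda>y. y \<le> a) ys)"
    and c: "length ys div 2 < length (filter (\<lambda>y. y \<le> c) ys)" and "a \<le> c"
  shows "median ys \<le> (a + c) / 2"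
proof -
  let ?q = "length ys"
  have q: "?q div 2 < ?q"
    using c length_filter_le[of "\<lambda>y. y \<le> c" ys] by linarith
  have "sort ys ! (?q div 2) \<le> c"
    using c q by (simp add: nth_sort_le_iff)
  moreover have "sort ys ! (?q div 2) \<le> a" if "odd ?q"
    using a q that by (subst nth_sort_le_iff) (auto elim: oddE)
  moreover have "sort ys ! (?q div 2 - 1) \<le> a" if "even ?q"
    using a q that by (subst nth_sort_le_iff) (auto elim: evenE)
  ultimately show ?thesis
    using \<open>a \<le> c\<close> unfolding median_def Let_def by auto
qed

lemma midpoint_le_median:
  fixes ys :: "real list"
  assumes a: "(length ys + 1) div 2 \<le> length (filter (\<lambda>y. a \<le> y) ys)"
    and c: "length ys div 2 < length (filter (\<lambda>y. c \<le> y) ys)" and "c \<le> a"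
  shows "(a + c) / 2 \<le> median ys"
proof -
  let ?q = "length ys"
  have q: "?q div 2 < ?q"
    using c length_filter_le[of "\<lambda>y. c \<le> y" ys] by linarith
  have "c \<le> sort ys ! (?q div 2 - 1)" if "even ?q"
    using c q that by (subst le_nth_sort_iff) (auto elim: evenE)
  moreover have "a \<le> sort ys ! (?q div 2)"
    using a q by (subst le_nth_sort_iff) (auto elim: oddE evenE)
  moreover have "c \<le> sort ys ! (?q div 2)"
    using c q by (subst le_nth_sort_iff) auto
  ultimately show ?thesis
    using \<open>c \<le> a\<close> unfolding median_def Let_def by auto
qed

lemma card_le_length_filter_received:
  assumes "finite T" and "\<forall>k\<in>T. P (v k)"
  shows "card T \<le> length (filter P (map v (sorted_list_of_set T) @ zs))"
proof -
  have "filter P (map v (sorted_list_of_set T)) = map v (sorted_list_of_set T)"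
    using assms by (simp add: filter_id_conv)
  then show ?thesis by simp
qed

lemma median_received_le:
  fixes v :: "nat \<Rightarrow> real"
  assumes T: "finite T" "q - f - 1 \<le> card T" "card T < q" and q: "2 * f + 2 \<le> q"
    and zs: "length zs = q - 1 - card T"
    and "a \<le> b" and c: "\<forall>k\<in>T. v k \<le> c" and "c \<le> b"
  shows "median (a # map v (sorted_list_of_set T) @ zs) \<le> (c + b) / 2"
proof (rule median_le_midpoint)
  let ?xs = "map v (sorted_list_of_set T) @ zs"
  have len: "length (a # ?xs) = q" using T zs by simp
  have "card T \<le> length (filter (\<lambda>y. y \<le> c) ?xs)"
    using T(1) c by (rule card_le_length_filter_received)
  moreover have "card T \<le> length (filter (\<lambda>y. y \<le> b) ?xs)"
    using T(1) c \<open>c \<le> b\<close> by (intro card_le_length_filter_received) auto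
  ultimately show "(length (a # ?xs) + 1) div 2 \<le> length (filter (\<lambda>y. y \<le> c) (a # ?xs))"
    and "length (a # ?xs) div 2 < length (filter (\<lambda>y. y \<le> b) (a # ?xs))"
    using len T q \<open>a \<le> b\<close> by simp_all linarith+
qed fact

lemma median_received_ge:
  fixes v :: "nat \<Rightarrow> real"
  assumes T: "finite T" "q - f - 1 \<le> card T" "card T < q" and q: "2 * f + 2 \<le> q"
    and zs: "length zs = q - 1 - card T"
    and "b \<le> a" and c: "\<forall>k\<in>T. c \<le> v k" and "b \<le> c"
  shows "(c + b) / 2 \<le> median (a # map v (sorted_list_of_set T) @ zs)"
proof (rule midpoint_le_median)
  let ?xs = "map v (sorted_list_of_set T) @ zs"
  have len: "length (a # ?xs) = q" using T zs by simp
  have "card T \<le> length (filter (\<lambda>y. c \<le> y) ?xs)"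
    using T(1) c by (rule card_le_length_filter_received)
  moreover have "card T \<le> length (filter (\<lambda>y. b \<le> y) ?xs)"
    using T(1) c \<open>b \<le> c\<close> by (intro card_le_length_filter_received) auto
  ultimately show "(length (a # ?xs) + 1) div 2 \<le> length (filter (\<lambda>y. c \<le> y) (a # ?xs))"
    and "length (a # ?xs) div 2 < length (filter (\<lambda>y. b \<le> y) (a # ?xs))"
    using len T q \<open>b \<le> a\<close> by simp_all linarith+
qed fact

section \<open>Coordinate ranges\<close>

definition coord_min :: "nat \<Rightarrow> (nat \<Rightarrow> real ^ 'd) \<Rightarrow> 'd \<Rightarrow> real" where
  "coord_min h v i = Min ((\<lambda>k. v k $ i) ` {..<h})"

definition coord_max :: "nat \<Rightarrow> (nat \<Rightarrow> real ^ 'd) \<Rightarrow> 'd \<Rightarrow> real" where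
  "coord_max h v i = Max ((\<lambda>k. v k $ i) ` {..<h})"

lemma coord_min_le: "k < h \<Longrightarrow> coord_min h v i \<le> v k $ i"
  unfolding coord_min_def by (rule Min_le) auto

lemma coord_max_ge: "k < h \<Longrightarrow> v k $ i \<le> coord_max h v i"
  unfolding coord_max_def by (rule Max_ge) auto

lemma coord_min_le_coord_max: "0 < h \<Longrightarrow> coord_min h v i \<le> coord_max h v i"
  using coord_min_le coord_max_ge order_trans by blast

lemma coord_min_max_attained:
  assumes "0 < h"
  obtains a b where "a < h" "b < h" "coord_min h v i = v a $ i" "coord_max h v i = v b $ i"
proof -
  have ne: "(\<lambda>k. v k $ i) ` {..<h} \<noteq> {}" using assms by auto
  show ?thesis
    using Min_in[OF _ ne] Max_in[OF _ ne] that unfolding coord_min_def coord_max_def by auto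
qed

lemma coord_diam_eq:
  assumes "0 < h"
  shows "coord_diam h v i = coord_max h v i - coord_min h v i"
proof -
  obtain a b where ab: "a < h" "b < h" "coord_min h v i = v a $ i" "coord_max h v i = v b $ i"
    using coord_min_max_attained[OF assms] .
  have D: "{\<bar>v j $ i - v k $ i\<bar> | j k. j < h \<and> k < h} = (\<lambda>(j, k). \<bar>v j $ i - v k $ i\<bar>) ` ({..<h} \<times> {..<h})"
    by auto
  have "\<bar>v j $ i - v k $ i\<bar> \<le> v b $ i - v a $ i" if "j < h" "k < h" for j k
    using coord_min_le[OF that(1), of v i] coord_min_le[OF that(2), of v i]
      coord_max_ge[OF that(1), of v i] coord_max_ge[OF that(2), of v i] ab
    by (simp add: abs_le_iff)
  moreover have "v b $ i - v a $ i \<le> coord_diam h v i"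
    unfolding coord_diam_def D using ab coord_min_le[OF ab(2), of v i]
    by (intro Max_ge) (auto intro!: image_eqI[where x="(b, a)"])
  ultimately show ?thesis
    unfolding coord_diam_def D ab(3,4) using assms by (intro antisym Max.boundedI) auto
qed

lemma Delta_eq: "0 < h \<Longrightarrow> Delta h v = (\<Sum>i\<in>UNIV. coord_max h v i - coord_min h v i)"
  unfolding Delta_def by (simp add: coord_diam_eq)

lemma Delta_nonneg: "0 < h \<Longrightarrow> 0 \<le> Delta h v"
  unfolding Delta_eq by (intro sum_nonneg) (simp add: coord_min_le_coord_max)

lemma abs_diff_le_coord_diam: "j < h \<Longrightarrow> k < h \<Longrightarrow> \<bar>v j $ i - v k $ i\<bar> \<le> coord_diam h v i"
  using coord_diam_eq[of h v i] coord_min_le[of j h v i] coord_min_le[of k h v i]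
    coord_max_ge[of j h v i] coord_max_ge[of k h v i]
  by (simp add: abs_le_iff)

lemma coord_diam_le:
  assumes "0 < h" and "\<And>j k. j < h \<Longrightarrow> k < h \<Longrightarrow> \<bar>v j $ i - v k $ i\<bar> \<le> c"
  shows "coord_diam h v i \<le> c"
proof -
  obtain a b where "a < h" "b < h" "coord_min h v i = v a $ i" "coord_max h v i = v b $ i"
    using coord_min_max_attained[OF assms(1)] .
  then show ?thesis using coord_diam_eq[OF assms(1), of v i] assms(2)[of b a] by simp
qed

lemma coord_diam_le_of_bounds:
  assumes "0 < h" and "\<And>j. j < h \<Longrightarrow> a \<le> v j $ i \<and> v j $ i \<le> b"
  shows "coord_diam h v i \<le> b - a"
proof (rule coord_diam_le[OF assms(1)])
  fix j k assume "j < h" "k < h"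
  then show "\<bar>v j $ i - v k $ i\<bar> \<le> b - a"
    using assms(2)[of j] assms(2)[of k] by (simp add: abs_le_iff)
qed

lemma coord_min_cong: "(\<And>k. k < h \<Longrightarrow> v k = v' k) \<Longrightarrow> coord_min h v i = coord_min h v' i"
  unfolding coord_min_def by (rule arg_cong[where f = Min]) auto

lemma coord_max_cong: "(\<And>k. k < h \<Longrightarrow> v k = v' k) \<Longrightarrow> coord_max h v i = coord_max h v' i"
  unfolding coord_max_def by (rule arg_cong[where f = Max]) auto

lemma borel_measurable_coord_min_max:
  fixes v :: "'a \<Rightarrow> nat \<Rightarrow> real ^ 'd"
  assumes "\<And>k. k < h \<Longrightarrow> (\<lambda>x. v x k) \<in> borel_measurable M"
  shows "k \<in> {..<h} \<Longrightarrow> (\<lambda>x. v x k $ i) \<in> borel_measurable M"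
    and "(\<lambda>x. coord_min h (v x) i) \<in> borel_measurable M"
    and "(\<lambda>x. coord_max h (v x) i) \<in> borel_measurable M"
proof -
  show vi [measurable]: "(\<lambda>x. v x k $ i) \<in> borel_measurable M" if "k \<in> {..<h}" for k
    using measurable_compose[OF assms borel_measurable_nth] that by simp
  show "(\<lambda>x. coord_min h (v x) i) \<in> borel_measurable M"
    "(\<lambda>x. coord_max h (v x) i) \<in> borel_measurable M"
    unfolding coord_min_def coord_max_def by measurable
qed

lemma borel_measurable_Delta:
  fixes v :: "'a \<Rightarrow> nat \<Rightarrow> real ^ 'd"
  assumes "0 < h" and "\<And>k. k < h \<Longrightarrow> (\<lambda>x. v x k) \<in> borel_measurable M"
  shows "(\<lambda>x. Delta h (v x)) \<in> borel_measurable M"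
  unfolding Delta_eq[OF assms(1)] using borel_measurable_coord_min_max[OF assms(2)] by measurable

section \<open>Contraction by the coordinate-wise median\<close>

lemma deliv_S_memD:
  assumes "s \<in> deliv_S h q f" and "j < h"
  shows "s j \<subseteq> {..<h} - {j}" "finite (s j)" "q - f - 1 \<le> card (s j)" "card (s j) \<le> q - 1"
  using assms unfolding deliv_S_def deliv_S_j_def by (auto intro: finite_subset)

lemma finite_deliv_S: "finite (deliv_S h q f)"
  unfolding deliv_S_def deliv_S_j_def
  by (intro finite_PiE) (auto intro: finite_subset[of _ "Pow {..<h}"])

lemma obtain_deliv_S_within:
  assumes C: "C \<subseteq> {..<h}" "q \<le> card C"
  obtains s where "s \<in> deliv_S h q f" "\<And>j. j < h \<Longrightarrow> s j \<subseteq> C"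
proof -
  have "\<exists>T. T \<subseteq> C - {j} \<and> card T = q - 1" for j
  proof -
    have "q - 1 \<le> card (C - {j})"
      using C finite_subset[OF C(1)] by (auto simp: card_Diff_singleton_if)
    then show ?thesis by (meson obtain_subset_with_card_n)
  qed
  then obtain T where T: "\<And>j. T j \<subseteq> C - {j} \<and> card (T j) = q - 1"
    by metis
  have "restrict T {..<h} \<in> deliv_S h q f"
    unfolding deliv_S_def deliv_S_j_def using T C(1) by fastforce
  moreover have "restrict T {..<h} j \<subseteq> C" if "j < h" for j
    using T that by auto
  ultimately show ?thesis by (rule that)
qed

definition one_sided :: "nat \<Rightarrow> (nat \<Rightarrow> real ^ 'd) \<Rightarrow> 'd \<Rightarrow> (nat \<Rightarrow> nat set) \<Rightarrow> bool" where
  "one_sided h v i s \<longleftrightarrow>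
     (\<forall>j<h. \<forall>k\<in>s j. 2 * v k $ i \<le> coord_min h v i + coord_max h v i) \<or>
     (\<forall>j<h. \<forall>k\<in>s j. coord_min h v i + coord_max h v i \<le> 2 * v k $ i)"

lemma coord_diam_vmedian_le:
  fixes lam :: "nat \<Rightarrow> real ^ 'd" and zs :: "nat \<Rightarrow> (real ^ 'd) list"
  assumes s: "s \<in> deliv_S h q f" and q: "2 * f + 2 \<le> q" and h: "0 < h"
    and zs: "\<And>j. j < h \<Longrightarrow> length (zs j) = q - 1 - card (s j)"
  defines "med \<equiv> \<lambda>j. vmedian (lam j # map lam (sorted_list_of_set (s j)) @ zs j)"
  shows "coord_diam h med i
           \<le> coord_diam h lam i - (if one_sided h lam i s then coord_diam h lam i / 4 else 0)"
proof -
  let ?lo = "coord_min h lam i" and ?hi = "coord_max h lam i"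
  have med_i: "med j $ i = median (lam j $ i # map (\<lambda>k. lam k $ i) (sorted_list_of_set (s j))
                                   @ map (\<lambda>u. u $ i) (zs j))" for j
    by (simp add: med_def vmedian_def comp_def)
  have sj: "k < h" if "j < h" "k \<in> s j" for j k
    using deliv_S_memD(1)[OF s that(1)] that(2) by auto
  have upper: "med j $ i \<le> (c + ?hi) / 2" if j: "j < h" and "\<forall>k\<in>s j. lam k $ i \<le> c" "c \<le> ?hi" for j c
    unfolding med_i using deliv_S_memD[OF s j] q zs[OF j] that coord_max_ge[OF j]
    by (intro median_received_le[where f = f]) auto
  have lower: "(c + ?lo) / 2 \<le> med j $ i" if j: "j < h" and "\<forall>k\<in>s j. c \<le> lam k $ i" "?lo \<le> c" for j c
    unfolding med_i using deliv_S_memD[OF s j] q zs[OF j] that coord_min_le[OF j]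
    by (intro median_received_ge[where f = f]) auto
  have bounds: "?lo \<le> med j $ i \<and> med j $ i \<le> ?hi" if "j < h" for j
    using upper[OF that, of ?hi] lower[OF that, of ?lo] sj[OF that] coord_min_le_coord_max[OF h]
    by (simp add: coord_min_le coord_max_ge)
  show ?thesis
  proof (cases "one_sided h lam i s")
    case False
    then show ?thesis
      using bounds coord_diam_le_of_bounds[OF h, of ?lo med i ?hi] coord_diam_eq[OF h, of lam i] by simp
  next
    case True
    then consider
        "\<forall>j<h. \<forall>k\<in>s j. 2 * lam k $ i \<le> ?lo + ?hi"
      | "\<forall>j<h. \<forall>k\<in>s j. ?lo + ?hi \<le> 2 * lam k $ i"
      unfolding one_sided_def by blast
    then have "coord_diam h med i \<le> 3 / 4 * (?hi - ?lo)"
    proof cases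
      case 1
      have "med j $ i \<le> ((?lo + ?hi) / 2 + ?hi) / 2" if "j < h" for j
        using 1 that coord_min_le_coord_max[OF h, of lam i] by (intro upper) (auto simp: mult.commute)
      then have "coord_diam h med i \<le> ((?lo + ?hi) / 2 + ?hi) / 2 - ?lo"
        using bounds by (intro coord_diam_le_of_bounds[OF h]) auto
      then show ?thesis by (simp add: field_simps)
    next
      case 2
      have "((?lo + ?hi) / 2 + ?lo) / 2 \<le> med j $ i" if "j < h" for j
        using 2 that coord_min_le_coord_max[OF h, of lam i] by (intro lower) (auto simp: mult.commute)
      then have "coord_diam h med i \<le> ?hi - ((?lo + ?hi) / 2 + ?lo) / 2"
        using bounds by (intro coord_diam_le_of_bounds[OF h]) auto
      then show ?thesis by (simp add: field_simps)
    qed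
    then show ?thesis using True coord_diam_eq[OF h, of lam i] by (simp add: field_simps)
  qed
qed

lemma obtain_one_sided:
  assumes "q \<le> h div 2"
  obtains s where "s \<in> deliv_S h q f" "one_sided h v i s"
proof -
  define c where "c = coord_min h v i + coord_max h v i"
  define A where "A = {k\<in>{..<h}. 2 * v k $ i \<le> c}"
  define B where "B = {k\<in>{..<h}. c \<le> 2 * v k $ i}"
  have "A \<union> B = {..<h}" unfolding A_def B_def by auto
  then have "h \<le> card A + card B" by (metis card_Un_le card_lessThan)
  then consider "q \<le> card A" | "q \<le> card B" using assms by linarith
  then show ?thesis
  proof cases
    case 1
    then obtain s where s: "s \<in> deliv_S h q f" "\<And>j. j < h \<Longrightarrow> s j \<subseteq> A"
      using obtain_deliv_S_within[of A h q] unfolding A_def by auto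
    have "one_sided h v i s"
      using s(2) unfolding one_sided_def c_def[symmetric] A_def by blast
    with s(1) show ?thesis by (rule that)
  next
    case 2
    then obtain s where s: "s \<in> deliv_S h q f" "\<And>j. j < h \<Longrightarrow> s j \<subseteq> B"
      using obtain_deliv_S_within[of B h q] unfolding B_def by auto
    have "one_sided h v i s"
      using s(2) unfolding one_sided_def c_def[symmetric] B_def by blast
    with s(1) show ?thesis by (rule that)
  qed
qed

definition contraction_gain :: "nat \<Rightarrow> (nat \<Rightarrow> real ^ 'd) \<Rightarrow> (nat \<Rightarrow> nat set) \<Rightarrow> real" where
  "contraction_gain h v s =
     (\<Sum>i\<in>UNIV. if one_sided h v i s then (coord_max h v i - coord_min h v i) / 4 else 0)"

lemma Delta_vmedian_le:
  fixes lam :: "nat \<Rightarrow> real ^ 'd" and zs :: "nat \<Rightarrow> (real ^ 'd) list"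
  assumes "s \<in> deliv_S h q f" and "2 * f + 2 \<le> q" and h: "0 < h"
    and "\<And>j. j < h \<Longrightarrow> length (zs j) = q - 1 - card (s j)"
  shows "Delta h (\<lambda>j. vmedian (lam j # map lam (sorted_list_of_set (s j)) @ zs j))
           \<le> Delta h lam - contraction_gain h lam s"
proof -
  have "Delta h (\<lambda>j. vmedian (lam j # map lam (sorted_list_of_set (s j)) @ zs j))
      \<le> (\<Sum>i\<in>UNIV. coord_diam h lam i - (if one_sided h lam i s then coord_diam h lam i / 4 else 0))"
    unfolding Delta_def using assms by (intro sum_mono coord_diam_vmedian_le)
  also have "\<dots> = Delta h lam - contraction_gain h lam s"
    unfolding Delta_def contraction_gain_def coord_diam_eq[OF h] by (simp only: sum_subtractf)
  finally show ?thesis .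
qed

lemma contraction_gain_nonneg: "0 < h \<Longrightarrow> 0 \<le> contraction_gain h v s"
  unfolding contraction_gain_def by (intro sum_nonneg) (simp add: coord_min_le_coord_max)

lemma contraction_gain_le: "0 < h \<Longrightarrow> contraction_gain h v s \<le> Delta h v / 4"
  unfolding contraction_gain_def Delta_eq sum_divide_distrib
  by (intro sum_mono) (simp add: coord_min_le_coord_max)

lemma Delta_le_sum_contraction_gain:
  assumes "1 \<le> q" "q \<le> h div 2"
  shows "Delta h v / 4 \<le> (\<Sum>s\<in>deliv_S h q f. contraction_gain h v s)"
proof -
  have h: "0 < h" using assms by linarith
  define t where "t s i = (if one_sided h v i s then (coord_max h v i - coord_min h v i) / 4 else 0)" for s i
  have "(coord_max h v i - coord_min h v i) / 4 \<le> (\<Sum>s\<in>deliv_S h q f. t s i)" for i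
  proof -
    obtain s where s: "s \<in> deliv_S h q f" "one_sided h v i s"
      using obtain_one_sided[OF assms(2)] .
    then have "(coord_max h v i - coord_min h v i) / 4 = t s i" unfolding t_def by simp
    also have "\<dots> \<le> (\<Sum>s\<in>deliv_S h q f. t s i)"
      using s(1) finite_deliv_S by (intro member_le_sum) (auto simp: t_def coord_min_le_coord_max[OF h])
    finally show ?thesis .
  qed
  then have "Delta h v / 4 \<le> (\<Sum>i\<in>UNIV. \<Sum>s\<in>deliv_S h q f. t s i)"
    unfolding Delta_eq[OF h] sum_divide_distrib by (intro sum_mono)
  also have "\<dots> = (\<Sum>s\<in>deliv_S h q f. contraction_gain h v s)"
    unfolding contraction_gain_def t_def by (rule sum.swap)
  finally show ?thesis .
qed

lemma contraction_gain_cong: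
  assumes v: "\<And>k. k < h \<Longrightarrow> v k = v' k" and s: "\<And>j. j < h \<Longrightarrow> s j \<subseteq> {..<h}"
  shows "contraction_gain h v s = contraction_gain h v' s"
proof -
  have mn: "coord_min h v i = coord_min h v' i" and mx: "coord_max h v i = coord_max h v' i" for i
    using v by (auto intro: coord_min_cong coord_max_cong)
  have "v k = v' k" if "j < h" "k \<in> s j" for j k
    using v s that by blast
  then have "one_sided h v i s = one_sided h v' i s" for i
    unfolding one_sided_def mn mx by auto
  then show ?thesis
    unfolding contraction_gain_def mn mx by simp
qed

lemma borel_measurable_contraction_gain:
  fixes v :: "'a \<Rightarrow> nat \<Rightarrow> real ^ 'd"
  assumes v: "\<And>k. k < h \<Longrightarrow> (\<lambda>x. v x k) \<in> borel_measurable M"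
    and s: "\<And>j. j < h \<Longrightarrow> s j \<subseteq> {..<h}"
  shows "(\<lambda>x. contraction_gain h (v x) s) \<in> borel_measurable M"
proof -
  note [measurable] = borel_measurable_coord_min_max[OF v]
  (* Bounding the relayed indices by h lets the measurability prover use v only below h. *)
  have "one_sided h (v x) i s \<longleftrightarrow>
      (\<forall>k\<in>{..<h}. (\<exists>j<h. k \<in> s j) \<longrightarrow> 2 * v x k $ i \<le> coord_min h (v x) i + coord_max h (v x) i) \<or>
      (\<forall>k\<in>{..<h}. (\<exists>j<h. k \<in> s j) \<longrightarrow> coord_min h (v x) i + coord_max h (v x) i \<le> 2 * v x k $ i)"
    (is "_ \<longleftrightarrow> ?relayed_one_sided x i") for x i
    using s unfolding one_sided_def by blast
  moreover have "Measurable.pred M (\<lambda>x. ?relayed_one_sided x i)" for i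
    by measurable
  ultimately have [measurable]: "Measurable.pred M (\<lambda>x. one_sided h (v x) i s)" for i
    by simp
  show ?thesis
    unfolding contraction_gain_def by measurable
qed

section \<open>The gradient step\<close>

lemma norm_le_Delta_if_in_box:
  fixes \<theta> :: "nat \<Rightarrow> real ^ 'd" and a b :: "real ^ 'd"
  assumes h: "0 < h"
    and a: "\<And>i. coord_min h \<theta> i \<le> a $ i \<and> a $ i \<le> coord_max h \<theta> i"
    and b: "\<And>i. coord_min h \<theta> i \<le> b $ i \<and> b $ i \<le> coord_max h \<theta> i"
  shows "norm (a - b) \<le> Delta h \<theta>"
proof -
  have "norm (a - b) \<le> (\<Sum>i\<in>UNIV. \<bar>(a - b) $ i\<bar>)"
    by (rule norm_le_l1_cart)
  also have "\<dots> \<le> (\<Sum>i\<in>UNIV. coord_max h \<theta> i - coord_min h \<theta> i)"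
  proof (rule sum_mono)
    fix i
    show "\<bar>(a - b) $ i\<bar> \<le> coord_max h \<theta> i - coord_min h \<theta> i"
      using a[of i] b[of i] by (simp add: abs_le_iff)
  qed
  finally show ?thesis unfolding Delta_eq[OF h] .
qed

lemma Delta_diff_scaleR_le:
  fixes \<theta> G :: "nat \<Rightarrow> real ^ 'd"
  assumes h: "0 < h" and "0 \<le> \<eta>"
  shows "Delta h (\<lambda>k. \<theta> k - \<eta> *\<^sub>R G k) \<le> Delta h \<theta> + \<eta> * Delta h G"
proof -
  have "coord_diam h (\<lambda>k. \<theta> k - \<eta> *\<^sub>R G k) i \<le> coord_diam h \<theta> i + \<eta> * coord_diam h G i" for i
  proof (rule coord_diam_le[OF h])
    fix j k assume jk: "j < h" "k < h"
    have "\<bar>(\<theta> j - \<eta> *\<^sub>R G j) $ i - (\<theta> k - \<eta> *\<^sub>R G k) $ i\<bar>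
        \<le> \<bar>\<theta> j $ i - \<theta> k $ i\<bar> + \<eta> * \<bar>G j $ i - G k $ i\<bar>"
    proof -
      have "(\<theta> j - \<eta> *\<^sub>R G j) $ i - (\<theta> k - \<eta> *\<^sub>R G k) $ i
          = (\<theta> j $ i - \<theta> k $ i) - \<eta> * (G j $ i - G k $ i)"
        by (simp add: algebra_simps)
      then show ?thesis
        using \<open>0 \<le> \<eta>\<close> abs_triangle_ineq4[of "\<theta> j $ i - \<theta> k $ i" "\<eta> * (G j $ i - G k $ i)"]
        by (simp add: abs_mult)
    qed
    also have "\<dots> \<le> coord_diam h \<theta> i + \<eta> * coord_diam h G i"
      using jk \<open>0 \<le> \<eta>\<close> by (intro add_mono mult_left_mono abs_diff_le_coord_diam)
    finally show "\<bar>(\<theta> j - \<eta> *\<^sub>R G j) $ i - (\<theta> k - \<eta> *\<^sub>R G k) $ i\<bar>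
        \<le> coord_diam h \<theta> i + \<eta> * coord_diam h G i" .
  qed
  then have "Delta h (\<lambda>k. \<theta> k - \<eta> *\<^sub>R G k)
      \<le> (\<Sum>i\<in>UNIV. coord_diam h \<theta> i + \<eta> * coord_diam h G i)"
    unfolding Delta_def by (rule sum_mono)
  also have "\<dots> = Delta h \<theta> + \<eta> * Delta h G"
    unfolding Delta_def by (simp add: sum.distrib sum_distrib_left)
  finally show ?thesis .
qed

lemma norm_average_diff_le:
  fixes u :: "'i \<Rightarrow> 'a::real_normed_vector"
  assumes "finite I" "I \<noteq> {}" and "\<And>i. i \<in> I \<Longrightarrow> norm (u i - t) \<le> D"
  shows "norm ((1 / real (card I)) *\<^sub>R (\<Sum>i\<in>I. u i) - t) \<le> D"
proof -
  have n: "0 < real (card I)" using assms by (simp add: card_gt_0_iff)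
  have "(1 / real (card I)) *\<^sub>R (\<Sum>i\<in>I. u i - t)
      = (1 / real (card I)) *\<^sub>R (\<Sum>i\<in>I. u i) - (1 / real (card I) * real (card I)) *\<^sub>R t"
    by (simp add: sum_subtractf scaleR_diff_right sum_constant_scaleR)
  then have "(1 / real (card I)) *\<^sub>R (\<Sum>i\<in>I. u i) - t = (1 / real (card I)) *\<^sub>R (\<Sum>i\<in>I. u i - t)"
    using n by simp
  then have "norm ((1 / real (card I)) *\<^sub>R (\<Sum>i\<in>I. u i) - t) \<le> (1 / real (card I)) * (\<Sum>i\<in>I. norm (u i - t))"
    using n by (simp add: norm_sum divide_right_mono)
  also have "\<dots> \<le> (1 / real (card I)) * (\<Sum>i\<in>I. D)"
    using assms(3) by (intro mult_left_mono sum_mono) auto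
  also have "\<dots> = D" using n by simp
  finally show ?thesis .
qed

lemma idx_diam_eq_Max_image:
  "idx_diam xs I = Max ((\<lambda>(i, j). norm (xs ! i - xs ! j)) ` (I \<times> I))"
  unfolding idx_diam_def by (rule arg_cong[where f = Max]) auto

lemma norm_le_idx_diam: "finite I \<Longrightarrow> i \<in> I \<Longrightarrow> j \<in> I \<Longrightarrow> norm (xs ! i - xs ! j) \<le> idx_diam xs I"
  unfolding idx_diam_eq_Max_image by (rule Max_ge) auto

lemma idx_diam_le:
  assumes "finite I" "I \<noteq> {}" and "\<And>i j. i \<in> I \<Longrightarrow> j \<in> I \<Longrightarrow> norm (xs ! i - xs ! j) \<le> D"
  shows "idx_diam xs I \<le> D"
  unfolding idx_diam_eq_Max_image using assms by (subst Max_le_iff) auto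

(* The optimal index set is no wider than any q - f indices of points of T, and it meets those
   indices because 2 (q - f) > q; so the average of its points is within D of a point of T. *)
lemma is_MDA_close_to_set:
  fixes ys :: "'a::real_normed_vector list"
  assumes mda: "is_MDA f ys v" and q: "2 * f + 1 \<le> length ys"
    and T: "length ys - f \<le> card {m. m < length ys \<and> ys ! m \<in> T}"
    and D: "\<And>a b. a \<in> T \<Longrightarrow> b \<in> T \<Longrightarrow> norm (a - b) \<le> D"
  shows "\<exists>t\<in>T. norm (v - t) \<le> D"
proof -
  define q where "q = length ys"
  define C where "C = {m. m < q \<and> ys ! m \<in> T}"
  obtain I where I: "I \<subseteq> {..<q}" "card I = q - f"
    and opt: "\<And>J. J \<subseteq> {..<q} \<Longrightarrow> card J = q - f \<Longrightarrow> idx_diam ys I \<le> idx_diam ys J"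
    and v: "v = (1 / real (q - f)) *\<^sub>R (\<Sum>i\<in>I. ys ! i)"
    using mda unfolding is_MDA_def q_def by auto
  have fin: "finite I" "finite C" using I(1) finite_subset unfolding C_def by auto
  have ne: "I \<noteq> {}" using I(2) q unfolding q_def by auto
  have "q - f \<le> card C" using T unfolding C_def q_def .
  then obtain J where J: "J \<subseteq> C" "card J = q - f" "finite J"
    by (rule obtain_subset_with_card_n)
  have "J \<noteq> {}" "J \<subseteq> {..<q}"
    using J q unfolding q_def C_def by auto
  have "idx_diam ys J \<le> D"
  proof (rule idx_diam_le[OF J(3) \<open>J \<noteq> {}\<close>])
    fix i j assume "i \<in> J" "j \<in> J"
    then show "norm (ys ! i - ys ! j) \<le> D" using J(1) D unfolding C_def by blast
  qed
  then have diam_I: "idx_diam ys I \<le> D"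
    using opt[OF \<open>J \<subseteq> {..<q}\<close> J(2)] by simp
  have "I \<inter> C \<noteq> {}"
  proof
    assume "I \<inter> C = {}"
    then have "card I + card C = card (I \<union> C)" using fin by (simp add: card_Un_disjoint)
    also have "\<dots> \<le> q" using I(1) card_mono[of "{..<q}" "I \<union> C"] unfolding C_def by auto
    finally show False using I(2) T q unfolding C_def q_def by linarith
  qed
  then obtain c where c: "c \<in> I" "ys ! c \<in> T" unfolding C_def by auto
  have close: "norm (ys ! i - ys ! c) \<le> D" if "i \<in> I" for i
    using order_trans[OF norm_le_idx_diam[OF fin(1) that c(1)] diam_I] .
  have "norm (v - ys ! c) \<le> D"
    unfolding v I(2)[symmetric] by (rule norm_average_diff_le[OF fin(1) ne close])
  then show ?thesis using c(2) by blast
qed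

lemma Delta_le_if_close:
  fixes G :: "nat \<Rightarrow> real ^ 'd"
  assumes h: "0 < h"
    and close: "\<And>j. j < h \<Longrightarrow> \<exists>t\<in>T. norm (G j - t) \<le> D"
    and D: "\<And>a b. a \<in> T \<Longrightarrow> b \<in> T \<Longrightarrow> norm (a - b) \<le> D"
  shows "Delta h G \<le> 3 * real CARD('d) * D"
proof -
  have "coord_diam h G i \<le> 3 * D" for i
  proof (rule coord_diam_le[OF h])
    fix j k assume "j < h" "k < h"
    then obtain a b where ab: "a \<in> T" "b \<in> T" "norm (G j - a) \<le> D" "norm (G k - b) \<le> D"
      using close by meson
    have "\<bar>G j $ i - G k $ i\<bar> \<le> norm (G j - G k)"
      by (metis component_le_norm_cart vector_minus_component)
    also have "\<dots> \<le> norm (G j - a) + norm (a - b) + norm (b - G k)"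
      using norm_triangle_ineq[of "G j - a" "a - G k"] norm_triangle_ineq[of "a - b" "b - G k"]
      by simp
    also have "\<dots> \<le> 3 * D"
      using ab D[OF ab(1,2)] by (simp add: norm_minus_commute)
    finally show "\<bar>G j $ i - G k $ i\<bar> \<le> 3 * D" .
  qed
  then have "Delta h G \<le> (\<Sum>i\<in>(UNIV :: 'd set). 3 * D)"
    unfolding Delta_def by (intro sum_mono)
  then show ?thesis by simp
qed

lemma Delta_gradient_step_le:
  fixes \<theta> x g G :: "nat \<Rightarrow> real ^ 'd" and gradL :: "real ^ 'd \<Rightarrow> real ^ 'd"
  assumes h: "0 < h" and "0 \<le> \<eta>" and lip: "l-lipschitz_on UNIV gradL"
    and box: "\<And>r i. r < hw \<Longrightarrow> coord_min h \<theta> i \<le> x r $ i \<and> x r $ i \<le> coord_max h \<theta> i"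
    and qw: "2 * fw + 1 \<le> qw"
    and MDA: "\<And>j. j < h \<Longrightarrow> \<exists>ys. length ys = qw \<and>
                 qw - fw \<le> card {m. m < qw \<and> ys ! m \<in> g ` {..<hw}} \<and> is_MDA fw ys (G j)"
  shows "Delta h (\<lambda>k. \<theta> k - \<eta> *\<^sub>R G k)
           \<le> Delta h \<theta> + \<eta> * (3 * real CARD('d) *
                (l * Delta h \<theta> + 2 * (\<Sum>r<hw. norm (g r - gradL (x r)))))"
proof -
  define D where "D = l * Delta h \<theta> + 2 * (\<Sum>r<hw. norm (g r - gradL (x r)))"
  have err: "norm (g r - gradL (x r)) \<le> (\<Sum>r<hw. norm (g r - gradL (x r)))" if "r < hw" for r
    using that by (intro member_le_sum) auto
  have spread: "norm (a - b) \<le> D" if ab: "a \<in> g ` {..<hw}" "b \<in> g ` {..<hw}" for a b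
  proof -
    obtain r s where rs: "r < hw" "s < hw" "a = g r" "b = g s" using ab by blast
    have "norm (gradL (x r) - gradL (x s)) \<le> l * norm (x r - x s)"
      using lipschitz_onD[OF lip, of "x r" "x s"] by (simp add: dist_norm)
    also have "\<dots> \<le> l * Delta h \<theta>"
      using lipschitz_on_nonneg[OF lip] box rs(1,2)
      by (intro mult_left_mono norm_le_Delta_if_in_box[OF h]) auto
    finally have "norm (gradL (x r) - gradL (x s)) \<le> l * Delta h \<theta>" .
    moreover have "norm (a - b)
        \<le> norm (g r - gradL (x r)) + norm (gradL (x r) - gradL (x s)) + norm (g s - gradL (x s))"
      using norm_triangle_ineq[of "g r - gradL (x r)" "gradL (x r) - g s"]
        norm_triangle_ineq[of "gradL (x r) - gradL (x s)" "gradL (x s) - g s"]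
      by (simp add: rs norm_minus_commute[of "gradL (x s)"])
    ultimately show ?thesis unfolding D_def using err[OF rs(1)] err[OF rs(2)] by linarith
  qed
  have "\<exists>t\<in>g ` {..<hw}. norm (G j - t) \<le> D" if j: "j < h" for j
  proof -
    obtain ys where "length ys = qw" "qw - fw \<le> card {m. m < qw \<and> ys ! m \<in> g ` {..<hw}}"
      "is_MDA fw ys (G j)"
      using MDA[OF j] by blast
    then show ?thesis using qw spread by (intro is_MDA_close_to_set) auto
  qed
  then have "Delta h G \<le> 3 * real CARD('d) * D"
    using spread by (intro Delta_le_if_close[OF h])
  then have "Delta h (\<lambda>k. \<theta> k - \<eta> *\<^sub>R G k) \<le> Delta h \<theta> + \<eta> * (3 * real CARD('d) * D)"
    using Delta_diff_scaleR_le[OF h \<open>0 \<le> \<eta>\<close>, of \<theta> G] \<open>0 \<le> \<eta>\<close>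
    by (meson add_left_mono mult_left_mono order_trans)
  then show ?thesis unfolding D_def .
qed

section \<open>Independent random delivering configurations\<close>

context prob_space
begin

lemma indep_var_of_indep_set_preimages:
  fixes \<phi> :: "'x \<Rightarrow> real" and H :: "'n \<Rightarrow> real"
  assumes indep: "indep_set {X -` U \<inter> space M | U. True} {F -` W \<inter> space M | W. W \<in> sets N}"
    and X: "X \<in> measurable M (count_space UNIV)" and F: "F \<in> measurable M N"
    and H: "H \<in> borel_measurable N"
  shows "indep_var borel (\<lambda>w. \<phi> (X w)) borel (\<lambda>w. H (F w))"
  unfolding indep_var_def indep_vars_def2
proof (intro conjI ballI)
  fix i :: bool
  show "random_variable (case_bool borel borel i) (case_bool (\<lambda>w. \<phi> (X w)) (\<lambda>w. H (F w)) i)"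
    using measurable_compose[OF X, of \<phi> borel] measurable_compose[OF F H] by (cases i) auto
next
  have sub_X: "{(\<lambda>w. \<phi> (X w)) -` A \<inter> space M | A. A \<in> sets borel} \<subseteq> {X -` U \<inter> space M | U. True}"
  proof
    fix Z assume "Z \<in> {(\<lambda>w. \<phi> (X w)) -` A \<inter> space M | A. A \<in> sets borel}"
    then obtain A where "Z = (\<lambda>w. \<phi> (X w)) -` A \<inter> space M" by blast
    then have "Z = X -` (\<phi> -` A) \<inter> space M" by auto
    then show "Z \<in> {X -` U \<inter> space M | U. True}" by blast
  qed
  have sub_F: "{(\<lambda>w. H (F w)) -` A \<inter> space M | A. A \<in> sets borel}
      \<subseteq> {F -` W \<inter> space M | W. W \<in> sets N}"
  proof
    fix Z assume "Z \<in> {(\<lambda>w. H (F w)) -` A \<inter> space M | A. A \<in> sets borel}"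
    then obtain A where A: "A \<in> sets borel" "Z = (\<lambda>w. H (F w)) -` A \<inter> space M" by blast
    then have "H -` A \<inter> space N \<in> sets N" using H by measurable
    moreover have "Z = F -` (H -` A \<inter> space N) \<inter> space M"
      using A(2) measurable_space[OF F] by auto
    ultimately show "Z \<in> {F -` W \<inter> space M | W. W \<in> sets N}" by blast
  qed
  show "indep_sets (\<lambda>i. {case_bool (\<lambda>w. \<phi> (X w)) (\<lambda>w. H (F w)) i -` A \<inter> space M | A.
      A \<in> sets (case_bool borel borel i)}) UNIV"
  proof (rule indep_sets_mono_sets[OF indep[unfolded indep_set_def]])
    fix i :: bool
    show "{case_bool (\<lambda>w. \<phi> (X w)) (\<lambda>w. H (F w)) i -` A \<inter> space M | A. A \<in> sets (case_bool borel borel i)}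
        \<subseteq> case_bool {X -` U \<inter> space M | U. True} {F -` W \<inter> space M | W. W \<in> sets N} i"
      using sub_X sub_F by (cases i) simp_all
  qed
qed

lemma integral_indicator_mult_indep:
  assumes indep: "indep_set {X -` U \<inter> space M | U. True} {F -` W \<inter> space M | W. W \<in> sets N}"
    and X: "X \<in> measurable M (count_space UNIV)" and F: "F \<in> measurable M N"
    and H: "H \<in> borel_measurable N" and int: "integrable M (\<lambda>w. H (F w))"
  shows "(\<integral>w. indicator {w \<in> space M. X w = s} w * H (F w) \<partial>M)
           = prob {w \<in> space M. X w = s} * (\<integral>w. H (F w) \<partial>M)"
proof -
  let ?E = "{w \<in> space M. X w = s}"
  have E: "?E \<in> events"
    using X by measurable
  have ind: "indicator {s} (X w) = (indicator ?E w :: real)" if "w \<in> space M" for w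
    using that by (simp add: indicator_def)
  have "(\<lambda>w. indicator {s} (X w) :: real) \<in> borel_measurable M"
    using measurable_compose[OF X, of "indicator {s}" borel] by simp
  then have "integrable M (\<lambda>w. indicator {s} (X w) :: real)"
    by (intro integrable_const_bound[where B = 1]) auto
  then have "(\<integral>w. indicator {s} (X w) * H (F w) \<partial>M)
      = (\<integral>w. indicator {s} (X w) \<partial>M) * (\<integral>w. H (F w) \<partial>M)"
    using int indep_var_of_indep_set_preimages[OF indep X F H] by (intro indep_var_lebesgue_integral)
  then show ?thesis
    using E ind by (simp cong: Bochner_Integration.integral_cong)
qed

lemma integral_random_selection_ge:
  fixes X :: "'a \<Rightarrow> 'x" and ell :: "'x \<Rightarrow> 'a \<Rightarrow> real"
  assumes S: "finite S" and X: "X \<in> measurable M (count_space UNIV)" "\<And>w. w \<in> space M \<Longrightarrow> X w \<in> S"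
    and \<rho>: "0 \<le> \<rho>" "\<And>s. s \<in> S \<Longrightarrow> \<rho> \<le> prob {w \<in> space M. X w = s}"
    and ell: "\<And>s. s \<in> S \<Longrightarrow> integrable M (ell s)" "\<And>s w. s \<in> S \<Longrightarrow> w \<in> space M \<Longrightarrow> 0 \<le> ell s w"
    and indep: "\<And>s. s \<in> S \<Longrightarrow> (\<integral>w. indicator {w \<in> space M. X w = s} w * ell s w \<partial>M)
                                   = prob {w \<in> space M. X w = s} * integral\<^sup>L M (ell s)"
  shows "integrable M (\<lambda>w. ell (X w) w)"
    and "\<rho> * (\<Sum>s\<in>S. integral\<^sup>L M (ell s)) \<le> (\<integral>w. ell (X w) w \<partial>M)"
proof -
  let ?E = "\<lambda>s. {w \<in> space M. X w = s}"
  have E: "?E s \<in> events" for s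
    using X(1) by measurable
  have sel: "ell (X w) w = (\<Sum>s\<in>S. indicator (?E s) w * ell s w)" if "w \<in> space M" for w
  proof -
    have "(\<Sum>s\<in>S. indicator (?E s) w * ell s w) = (\<Sum>s\<in>S. if X w = s then ell s w else 0)"
      using that by (intro sum.cong) (auto simp: indicator_def)
    also have "\<dots> = ell (X w) w"
      using S X(2)[OF that] by simp
    finally show ?thesis by simp
  qed
  have int: "integrable M (\<lambda>w. indicator (?E s) w * ell s w)" if "s \<in> S" for s
    using integrable_real_mult_indicator[OF E ell(1)[OF that]] by (simp add: mult.commute)
  then have "integrable M (\<lambda>w. \<Sum>s\<in>S. indicator (?E s) w * ell s w)"
    by (rule Bochner_Integration.integrable_sum)
  then show "integrable M (\<lambda>w. ell (X w) w)"
    by (rule Bochner_Integration.integrable_cong[OF refl, THEN iffD2, rotated]) (rule sel)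
  have "\<rho> * (\<Sum>s\<in>S. integral\<^sup>L M (ell s)) \<le> (\<Sum>s\<in>S. prob (?E s) * integral\<^sup>L M (ell s))"
    unfolding sum_distrib_left using \<rho> ell(2)
    by (intro sum_mono mult_right_mono integral_nonneg_AE AE_I2) auto
  also have "\<dots> = (\<integral>w. (\<Sum>s\<in>S. indicator (?E s) w * ell s w) \<partial>M)"
    using int indep by (simp add: Bochner_Integration.integral_sum)
  also have "\<dots> = (\<integral>w. ell (X w) w \<partial>M)"
    using sel by (intro Bochner_Integration.integral_cong) auto
  finally show "\<rho> * (\<Sum>s\<in>S. integral\<^sup>L M (ell s)) \<le> (\<integral>w. ell (X w) w \<partial>M)" .
qed

lemma nn_integral_random_contraction_le:
  fixes X :: "'a \<Rightarrow> 'x" and ell :: "'x \<Rightarrow> 'a \<Rightarrow> real" and R Y :: "'a \<Rightarrow> real"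
  assumes S: "finite S" and X: "X \<in> measurable M (count_space UNIV)" "\<And>w. w \<in> space M \<Longrightarrow> X w \<in> S"
    and \<rho>: "0 \<le> \<rho>" "\<And>s. s \<in> S \<Longrightarrow> \<rho> \<le> prob {w \<in> space M. X w = s}"
    and ell: "\<And>s. s \<in> S \<Longrightarrow> integrable M (ell s)"
      "\<And>s w. s \<in> S \<Longrightarrow> w \<in> space M \<Longrightarrow> 0 \<le> ell s w \<and> ell s w \<le> R w / 4"
    and indep: "\<And>s. s \<in> S \<Longrightarrow> (\<integral>w. indicator {w \<in> space M. X w = s} w * ell s w \<partial>M)
                                   = prob {w \<in> space M. X w = s} * integral\<^sup>L M (ell s)"
    and R: "integrable M R" "(\<integral>w. R w \<partial>M) \<le> B" "\<And>w. w \<in> space M \<Longrightarrow> R w / 4 \<le> (\<Sum>s\<in>S. ell s w)"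
    and Y: "\<And>w. w \<in> space M \<Longrightarrow> Y w \<le> R w - ell (X w) w"
  shows "(\<integral>\<^sup>+ w. ennreal (Y w) \<partial>M) \<le> ennreal ((1 - \<rho> / 4) * B)"
proof -
  note sel = integral_random_selection_ge[OF S X \<rho> ell(1) _ indep]
  have sel_int: "integrable M (\<lambda>w. ell (X w) w)"
    and sel_ge: "\<rho> * (\<Sum>s\<in>S. integral\<^sup>L M (ell s)) \<le> (\<integral>w. ell (X w) w \<partial>M)"
    using sel ell(2) by blast+
  have "(\<integral>w. R w \<partial>M) / 4 = (\<integral>w. R w / 4 \<partial>M)"
    by simp
  also have "\<dots> \<le> (\<integral>w. (\<Sum>s\<in>S. ell s w) \<partial>M)"
    using R(1,3) ell(1) by (intro integral_mono Bochner_Integration.integrable_sum) auto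
  also have "\<dots> = (\<Sum>s\<in>S. integral\<^sup>L M (ell s))"
    using ell(1) by (simp add: Bochner_Integration.integral_sum)
  finally have "\<rho> * ((\<integral>w. R w \<partial>M) / 4) \<le> (\<integral>w. ell (X w) w \<partial>M)"
    using sel_ge \<rho>(1) by (meson mult_left_mono order_trans)
  moreover have "\<rho> \<le> 1"
    using X(2) \<rho>(2) prob_le_1 not_empty order_trans by blast
  ultimately have "(\<integral>w. R w - ell (X w) w \<partial>M) \<le> (1 - \<rho> / 4) * B"
    using R(1,2) sel_int mult_left_mono[OF R(2), of "1 - \<rho> / 4"] by (simp add: algebra_simps)
  moreover have "(\<integral>\<^sup>+ w. ennreal (Y w) \<partial>M) \<le> (\<integral>\<^sup>+ w. ennreal (R w - ell (X w) w) \<partial>M)"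
    using Y by (intro nn_integral_mono ennreal_leI)
  moreover have "(\<integral>\<^sup>+ w. ennreal (R w - ell (X w) w) \<partial>M) = ennreal (\<integral>w. R w - ell (X w) w \<partial>M)"
    using R(1) sel_int ell(2) X(2) by (intro nn_integral_eq_integral AE_I2) force+
  ultimately show ?thesis
    by (metis ennreal_leI order_trans)
qed

lemma expectation_Delta_gradient_step_le:
  fixes \<theta> x :: "nat \<Rightarrow> real ^ 'd" and g G :: "nat \<Rightarrow> 'a \<Rightarrow> real ^ 'd"
    and gradL :: "real ^ 'd \<Rightarrow> real ^ 'd"
  assumes h: "0 < h" and \<eta>: "0 \<le> \<eta>" and lip: "l-lipschitz_on UNIV gradL"
    and box: "\<And>r i. r < hw \<Longrightarrow> coord_min h \<theta> i \<le> x r $ i \<and> x r $ i \<le> coord_max h \<theta> i"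
    and g_int: "\<And>r. r < hw \<Longrightarrow> integrable M (\<lambda>w. norm (g r w - gradL (x r)))"
    and g_var: "\<And>r. r < hw \<Longrightarrow> (\<integral>w. norm (g r w - gradL (x r)) \<partial>M) \<le> \<sigma>'"
    and qw: "2 * fw + 1 \<le> qw"
    and MDA: "\<And>j w. j < h \<Longrightarrow> w \<in> space M \<Longrightarrow> \<exists>ys. length ys = qw \<and>
                 qw - fw \<le> card {m. m < qw \<and> ys ! m \<in> (\<lambda>r. g r w) ` {..<hw}} \<and> is_MDA fw ys (G j w)"
    and G_meas: "\<And>j. j < h \<Longrightarrow> G j \<in> borel_measurable M"
  shows "integrable M (\<lambda>w. Delta h (\<lambda>k. \<theta> k - \<eta> *\<^sub>R G k w))"
    and "(\<integral>w. Delta h (\<lambda>k. \<theta> k - \<eta> *\<^sub>R G k w) \<partial>M)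
           \<le> Delta h \<theta> + \<eta> * (3 * real CARD('d) * (l * Delta h \<theta> + 2 * (real hw * \<sigma>')))"
proof -
  define B where "B w = Delta h \<theta> + \<eta> * (3 * real CARD('d) *
                    (l * Delta h \<theta> + 2 * (\<Sum>r<hw. norm (g r w - gradL (x r)))))" for w
  have err_int: "integrable M (\<lambda>w. \<Sum>r<hw. norm (g r w - gradL (x r)))"
    using g_int by (intro Bochner_Integration.integrable_sum) auto
  then have B_int: "integrable M B"
    unfolding B_def by simp
  have err_integral: "(\<integral>w. (\<Sum>r<hw. norm (g r w - gradL (x r))) \<partial>M)
      = (\<Sum>r<hw. \<integral>w. norm (g r w - gradL (x r)) \<partial>M)"
    using g_int by (intro Bochner_Integration.integral_sum) auto
  have step: "Delta h (\<lambda>k. \<theta> k - \<eta> *\<^sub>R G k w) \<le> B w" if "w \<in> space M" for w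
    unfolding B_def using h \<eta> lip box qw MDA[OF _ that] by (rule Delta_gradient_step_le)
  have "(\<lambda>w. Delta h (\<lambda>k. \<theta> k - \<eta> *\<^sub>R G k w)) \<in> borel_measurable M"
    using G_meas by (intro borel_measurable_Delta[OF h]) auto
  then show int: "integrable M (\<lambda>w. Delta h (\<lambda>k. \<theta> k - \<eta> *\<^sub>R G k w))"
  proof (rule Bochner_Integration.integrable_bound[OF B_int _ AE_I2])
    fix w assume "w \<in> space M"
    then show "norm (Delta h (\<lambda>k. \<theta> k - \<eta> *\<^sub>R G k w)) \<le> norm (B w)"
      using step Delta_nonneg[OF h, of "\<lambda>k. \<theta> k - \<eta> *\<^sub>R G k w"] by force
  qed
  have "(\<integral>w. Delta h (\<lambda>k. \<theta> k - \<eta> *\<^sub>R G k w) \<partial>M) \<le> integral\<^sup>L M B"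
    using int B_int step by (intro integral_mono) auto
  also have "\<dots> = Delta h \<theta> + \<eta> * (3 * real CARD('d) *
                    (l * Delta h \<theta> + 2 * (\<Sum>r<hw. \<integral>w. norm (g r w - gradL (x r)) \<partial>M)))"
    unfolding B_def using err_int by (simp add: err_integral prob_space)
  also have "\<dots> \<le> Delta h \<theta> + \<eta> * (3 * real CARD('d) * (l * Delta h \<theta> + 2 * (real hw * \<sigma>')))"
    using g_var sum_mono[of "{..<hw}" "\<lambda>r. \<integral>w. norm (g r w - gradL (x r)) \<partial>M" "\<lambda>_. \<sigma>'"] \<eta>
    by (intro add_left_mono mult_left_mono) auto
  finally show "(\<integral>w. Delta h (\<lambda>k. \<theta> k - \<eta> *\<^sub>R G k w) \<partial>M)
           \<le> Delta h \<theta> + \<eta> * (3 * real CARD('d) * (l * Delta h \<theta> + 2 * (real hw * \<sigma>')))" .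
qed

lemma contraction_gain_indep:
  fixes \<theta> :: "nat \<Rightarrow> real ^ 'd" and g G :: "nat \<Rightarrow> 'a \<Rightarrow> real ^ 'd" and X :: "'a \<Rightarrow> 'x"
  assumes indep: "indep_set {X -` U \<inter> space M | U. True}
        {(\<lambda>w. (restrict (\<lambda>r. g r w) {..<hw}, restrict (\<lambda>j. G j w) {..<h})) -` W \<inter> space M | W.
           W \<in> sets (PiM {..<hw} (\<lambda>_. borel) \<Otimes>\<^sub>M PiM {..<h} (\<lambda>_. borel))}"
    and X_meas: "X \<in> measurable M (count_space UNIV)"
    and g_meas: "\<And>r. r < hw \<Longrightarrow> g r \<in> borel_measurable M"
    and G_meas: "\<And>j. j < h \<Longrightarrow> G j \<in> borel_measurable M"
    and h: "0 < h" and s: "s \<in> deliv_S h q f"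
    and R_int: "integrable M (\<lambda>w. Delta h (\<lambda>k. \<theta> k - \<eta> *\<^sub>R G k w))"
  shows "integrable M (\<lambda>w. contraction_gain h (\<lambda>k. \<theta> k - \<eta> *\<^sub>R G k w) s)"
    and "(\<integral>w. indicator {w \<in> space M. X w = c} w * contraction_gain h (\<lambda>k. \<theta> k - \<eta> *\<^sub>R G k w) s \<partial>M)
          = prob {w \<in> space M. X w = c} * (\<integral>w. contraction_gain h (\<lambda>k. \<theta> k - \<eta> *\<^sub>R G k w) s \<partial>M)"
proof -
  define N where "N = (PiM {..<hw} (\<lambda>_. borel) \<Otimes>\<^sub>M PiM {..<h} (\<lambda>_. borel)
                        :: ((nat \<Rightarrow> real ^ 'd) \<times> (nat \<Rightarrow> real ^ 'd)) measure)"
  define F where "F w = (restrict (\<lambda>r. g r w) {..<hw}, restrict (\<lambda>j. G j w) {..<h})" for w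
  define H where "H p = contraction_gain h (\<lambda>k. \<theta> k - \<eta> *\<^sub>R snd p k) s"
    for p :: "(nat \<Rightarrow> real ^ 'd) \<times> (nat \<Rightarrow> real ^ 'd)"
  have s_bounded: "\<And>j. j < h \<Longrightarrow> s j \<subseteq> {..<h}"
    using deliv_S_memD(1)[OF s] by blast
  have F: "F \<in> measurable M N"
    unfolding N_def F_def by (intro measurable_Pair measurable_restrict) (auto intro: g_meas G_meas)
  have "(\<lambda>p. \<theta> k - \<eta> *\<^sub>R snd p k) \<in> borel_measurable N" if "k < h" for k
  proof -
    have "k \<in> {..<h}" using that by simp
    then have "(\<lambda>p. snd p k) \<in> borel_measurable N"
      unfolding N_def by measurable
    then show ?thesis by measurable
  qed
  then have H: "H \<in> borel_measurable N"
    unfolding H_def using s_bounded by (rule borel_measurable_contraction_gain)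
  have HF: "H (F w) = contraction_gain h (\<lambda>k. \<theta> k - \<eta> *\<^sub>R G k w) s" for w
    unfolding H_def F_def using s_bounded by (intro contraction_gain_cong) auto
  have "(\<lambda>w. contraction_gain h (\<lambda>k. \<theta> k - \<eta> *\<^sub>R G k w) s) \<in> borel_measurable M"
    using G_meas s_bounded by (intro borel_measurable_contraction_gain) auto
  then show int: "integrable M (\<lambda>w. contraction_gain h (\<lambda>k. \<theta> k - \<eta> *\<^sub>R G k w) s)"
  proof (rule Bochner_Integration.integrable_bound[OF R_int _ AE_I2])
    fix w
    show "norm (contraction_gain h (\<lambda>k. \<theta> k - \<eta> *\<^sub>R G k w) s)
        \<le> norm (Delta h (\<lambda>k. \<theta> k - \<eta> *\<^sub>R G k w))"
      using contraction_gain_nonneg[OF h, of "\<lambda>k. \<theta> k - \<eta> *\<^sub>R G k w" s]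
        contraction_gain_le[OF h, of "\<lambda>k. \<theta> k - \<eta> *\<^sub>R G k w" s]
      by simp
  qed
  from integral_indicator_mult_indep[OF indep[folded F_def N_def] X_meas F H, of c] int
  show "(\<integral>w. indicator {w \<in> space M. X w = c} w * contraction_gain h (\<lambda>k. \<theta> k - \<eta> *\<^sub>R G k w) s \<partial>M)
          = prob {w \<in> space M. X w = c} * (\<integral>w. contraction_gain h (\<lambda>k. \<theta> k - \<eta> *\<^sub>R G k w) s \<partial>M)"
    unfolding HF by simp
qed

end

theorem mainTheorem11:
  fixes M :: "'w measure"
    and L :: "real ^ 'd \<Rightarrow> real" and gradL :: "real ^ 'd \<Rightarrow> real ^ 'd"
    and l \<eta> \<sigma>' \<rho> :: real
    and hps hw nps fps qps fw qw :: nat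
    and \<theta> :: "nat \<Rightarrow> real ^ 'd" and x :: "nat \<Rightarrow> real ^ 'd"
    and g :: "nat \<Rightarrow> 'w \<Rightarrow> real ^ 'd" and G :: "nat \<Rightarrow> 'w \<Rightarrow> real ^ 'd"
    and X :: "'w \<Rightarrow> (nat \<Rightarrow> nat set)"
    and z :: "nat \<Rightarrow> nat \<Rightarrow> 'w \<Rightarrow> real ^ 'd"
  assumes P: "prob_space M"
    and L_grad: "\<And>y. (L has_derivative (\<lambda>h. gradL y \<bullet> h)) (at y)"
    and L_lip: "l-lipschitz_on UNIV gradL"
    and eta: "\<eta> > 0"
    and x_box: "\<And>r i. r < hw \<Longrightarrow>
        Min ((\<lambda>k. \<theta> k $ i) ` {..<hps}) \<le> x r $ i \<and> x r $ i \<le> Max ((\<lambda>k. \<theta> k $ i) ` {..<hps})"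
    and g_meas: "\<And>r. r < hw \<Longrightarrow> g r \<in> borel_measurable M"
    and g_int: "\<And>r. r < hw \<Longrightarrow> integrable M (\<lambda>w. norm (g r w - gradL (x r)))"
    and g_var: "\<And>r. r < hw \<Longrightarrow> (\<integral>w. norm (g r w - gradL (x r)) \<partial>M) \<le> \<sigma>'"
    and fw: "fw \<ge> 1" and qw: "qw \<ge> 2 * fw + 1"
    and G_MDA: "\<And>j w. j < hps \<Longrightarrow> w \<in> space M \<Longrightarrow>
        \<exists>ys. length ys = qw \<and>
             card {m. m < qw \<and> ys ! m \<in> (\<lambda>r. g r w) ` {..<hw}} \<ge> qw - fw \<and>
             is_MDA fw ys (G j w)"
    and G_meas: "\<And>j. j < hps \<Longrightarrow> G j \<in> borel_measurable M"
    and X_meas: "X \<in> measurable M (count_space UNIV)"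
    and X_vals: "\<And>w. w \<in> space M \<Longrightarrow> X w \<in> deliv_S hps qps fps"
    and X_indep: "prob_space.indep_set M
        {X -` U \<inter> space M | U. True}
        {(\<lambda>w. (restrict (\<lambda>r. g r w) {..<hw}, restrict (\<lambda>j. G j w) {..<hps})) -` W \<inter> space M | W.
           W \<in> sets (PiM {..<hw} (\<lambda>_. borel) \<Otimes>\<^sub>M PiM {..<hps} (\<lambda>_. borel))}"
    and rho: "\<rho> > 0"
    and X_prob: "\<And>s. s \<in> deliv_S hps qps fps \<Longrightarrow> measure M {w \<in> space M. X w = s} \<ge> \<rho>"
    and z_meas: "\<And>j m. z j m \<in> borel_measurable M"
    and fps: "fps \<ge> 1"
    and hps: "hps = nps - fps"
    and qps: "2 * fps + 2 \<le> qps" "qps \<le> hps div 2"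
  shows "(\<integral>\<^sup>+ w. ennreal (Delta hps (\<lambda>j.
            vmedian ((\<theta> j - \<eta> *\<^sub>R G j w)
              # map (\<lambda>k. \<theta> k - \<eta> *\<^sub>R G k w) (sorted_list_of_set (X w j))
              @ map (\<lambda>m. z j m w) [0..<qps - 1 - card (X w j)]))) \<partial>M)
         \<le> ennreal ((1 + 3 * real CARD('d) * \<eta> * l - \<rho> / 4) * Delta hps \<theta>
                    + 6 * real CARD('d) * \<eta> * real hw * \<sigma>')"
proof -
  (* Only the Lipschitz continuity of gradL enters. *)
  interpret prob_space M by (rule P)
  have h: "0 < hps" and q: "1 \<le> qps" using qps by linarith+
  define K where "K = 3 * real CARD('d) * (l * Delta hps \<theta> + 2 * (real hw * \<sigma>'))"
  have box: "\<And>r i. r < hw \<Longrightarrow> coord_min hps \<theta> i \<le> x r $ i \<and> x r $ i \<le> coord_max hps \<theta> i"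
    using x_box unfolding coord_min_def coord_max_def .
  have R_int: "integrable M (\<lambda>w. Delta hps (\<lambda>k. \<theta> k - \<eta> *\<^sub>R G k w))"
    and R_le: "(\<integral>w. Delta hps (\<lambda>k. \<theta> k - \<eta> *\<^sub>R G k w) \<partial>M) \<le> Delta hps \<theta> + \<eta> * K"
    using expectation_Delta_gradient_step_le[OF h less_imp_le[OF eta] L_lip box g_int g_var qw G_MDA G_meas]
    unfolding K_def by simp_all
  note gain = contraction_gain_indep[OF X_indep X_meas g_meas G_meas h _ R_int]
  have "0 \<le> \<sigma>'" if "0 < hw"
    using g_var[OF that] by (rule order_trans[rotated]) simp
  then have "0 \<le> K"
    unfolding K_def using lipschitz_on_nonneg[OF L_lip] Delta_nonneg[OF h, of \<theta>] by (cases "hw = 0") auto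
  then have "(1 - \<rho> / 4) * (Delta hps \<theta> + \<eta> * K) \<le> (1 - \<rho> / 4) * Delta hps \<theta> + \<eta> * K"
    using mult_nonneg_nonneg[of \<rho> "\<eta> * K"] rho eta by (simp add: algebra_simps)
  also have "\<dots> = (1 + 3 * real CARD('d) * \<eta> * l - \<rho> / 4) * Delta hps \<theta>
                    + 6 * real CARD('d) * \<eta> * real hw * \<sigma>'"
    by (simp add: K_def algebra_simps)
  finally show ?thesis
    by (intro order_trans[OF nn_integral_random_contraction_le[OF finite_deliv_S X_meas X_vals _ X_prob
          gain(1) _ gain(2) R_int R_le Delta_le_sum_contraction_gain[OF q qps(2)]] ennreal_leI])
      (use rho contraction_gain_nonneg[OF h] contraction_gain_le[OF h] in
        \<open>auto intro!: Delta_vmedian_le[OF X_vals qps(1) h]\<close>)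
qed

end
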